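(* Let $n,m$ be positive integers and $\mathbf a,\mathbf b\in\mathbb N^n$ with $a_1+\cdots+a_i\ge b_1+\cdots+b_i$ for all $i$. There is a bijection between the set of plane partitions of skew shape $\theta(\mathbf a,\mathbf b)$ with all entries in $\{0,1,\dots,m\}$ and the set of integral points (integer-valued flows) of $\mathcal F_{G(n,m)}(\mathbf a,\mathbf b)$.
   Context: $\theta(\mathbf a,\mathbf b)=\lambda/\mu$ where $\lambda=(a_1+\cdots+a_n,\ldots,a_1+a_2,a_1)$ and $\mu=(b_1+\cdots+b_n,\ldots,b_1+b_2,b_1)$ (the dominance hypothesis ensures $\mu\subseteq\lambda$). A plane partition of skew shape $\lambda/\mu$ is a filling of the cells $(i,j)$, $\mu_i<j\le\lambda_i$, by nonnegative integers that weakly decrease along each row (left to right) and down each column. $G(n,m)$ is the directed graph with vertex set $\{(i,j):1\le i\le n,\ 0\le j\le m\}\cup\{s\}$ and edges $((i,j),(i,j+1))$ for $1\le i\le n$, $0\le j\le m-1$; $((i,j),(i+1,j))$ for $1\le i\le n-1$, $0\le j\le m$; and $((n,j),s)$ for $0\le j\le m$. $\mathcal F_{G(n,m)}(\mathbf a,\mathbf b)$ is the set of nonnegative real edge weightings $f$ such that at each vertex, outflow minus inflow equals its netflow: $a_i$ at $(i,0)$, $-b_i$ at $(i,m)$, $-\sum_i a_i+\sum_i b_i$ at $s$, and $0$ elsewhere. *)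

theory Defs
  imports Complex_Main
begin

text \<open>Vectors a, b in N^n are functions nat => nat indexed by 1..n.\<close>

definition shape_part :: "(nat \<Rightarrow> nat) \<Rightarrow> nat \<Rightarrow> nat \<Rightarrow> nat" where
  "shape_part a n i = (\<Sum>k = 1..(n + 1 - i). a k)"

definition skew_cells :: "(nat \<Rightarrow> nat) \<Rightarrow> (nat \<Rightarrow> nat) \<Rightarrow> nat \<Rightarrow> (nat \<times> nat) set" where
  "skew_cells a b n = {(i, j). 1 \<le> i \<and> i \<le> n \<and> shape_part b n i < j \<and> j \<le> shape_part a n i}"

definition plane_partitions_bounded ::
  "(nat \<Rightarrow> nat) \<Rightarrow> (nat \<Rightarrow> nat) \<Rightarrow> nat \<Rightarrow> nat \<Rightarrow> (nat \<times> nat \<Rightarrow> nat) set" where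
  "plane_partitions_bounded a b n m =
     {P. (\<forall>c. c \<notin> skew_cells a b n \<longrightarrow> P c = 0)
       \<and> (\<forall>c \<in> skew_cells a b n. P c \<le> m)
       \<and> (\<forall>i j. (i, j) \<in> skew_cells a b n \<and> (i, Suc j) \<in> skew_cells a b n \<longrightarrow> P (i, Suc j) \<le> P (i, j))
       \<and> (\<forall>i j. (i, j) \<in> skew_cells a b n \<and> (Suc i, j) \<in> skew_cells a b n \<longrightarrow> P (Suc i, j) \<le> P (i, j))}"

datatype gvert = Node nat nat | Sink

definition G_verts :: "nat \<Rightarrow> nat \<Rightarrow> gvert set" where
  "G_verts n m = {Node i j | i j. 1 \<le> i \<and> i \<le> n \<and> j \<le> m} \<union> {Sink}"

definition G_edges :: "nat \<Rightarrow> nat \<Rightarrow> (gvert \<times> gvert) set" where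
  "G_edges n m =
     {(Node i j, Node i (Suc j)) | i j. 1 \<le> i \<and> i \<le> n \<and> j < m}
   \<union> {(Node i j, Node (Suc i) j) | i j. 1 \<le> i \<and> i < n \<and> j \<le> m}
   \<union> {(Node n j, Sink) | j. j \<le> m}"

definition G_netflow :: "(nat \<Rightarrow> nat) \<Rightarrow> (nat \<Rightarrow> nat) \<Rightarrow> nat \<Rightarrow> nat \<Rightarrow> gvert \<Rightarrow> real" where
  "G_netflow a b n m v = (case v of
      Node i j \<Rightarrow> (if j = 0 then real (a i) else 0) - (if j = m then real (b i) else 0)
    | Sink \<Rightarrow> - (\<Sum>i = 1..n. real (a i)) + (\<Sum>i = 1..n. real (b i)))"

definition flow_polytope :: "(nat \<Rightarrow> nat) \<Rightarrow> (nat \<Rightarrow> nat) \<Rightarrow> nat \<Rightarrow> nat \<Rightarrow> (gvert \<times> gvert \<Rightarrow> real) set" where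
  "flow_polytope a b n m =
     {f. (\<forall>e. e \<notin> G_edges n m \<longrightarrow> f e = 0)
       \<and> (\<forall>e \<in> G_edges n m. 0 \<le> f e)
       \<and> (\<forall>v \<in> G_verts n m.
            (\<Sum>e \<in> {e \<in> G_edges n m. fst e = v}. f e) - (\<Sum>e \<in> {e \<in> G_edges n m. snd e = v}. f e)
              = G_netflow a b n m v)}"

definition integer_flows :: "(nat \<Rightarrow> nat) \<Rightarrow> (nat \<Rightarrow> nat) \<Rightarrow> nat \<Rightarrow> nat \<Rightarrow> (gvert \<times> gvert \<Rightarrow> real) set" where
  "integer_flows a b n m = {f \<in> flow_polytope a b n m. \<forall>e. f e \<in> \<int>}"

end

theory Submission
  imports Defs
begin

text \<open>
  Both sides are encoded by the same array: C i j, for the row of length a_1 + ... + a_i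
  (counting rows from the bottom) and 0 \<le> j \<le> m, is the number of cells of that row
  with entry at most j. As the rows weakly decrease, these counts determine the partition;
  the last column C i m is the length of the row, and the column condition becomes
  C i j \<le> a_i + C (i - 1) j. On the flow side C i j is the total flow along the downward
  edges leaving (i, 0), ..., (i, j); conservation then forces the flow along the edge
  (i, j) \<rightarrow> (i, j + 1) to be a_i + C (i - 1) j - C i j, whose nonnegativity is exactly the
  column condition.
\<close>

subsection \<open>Local structure of the graph G(n, m)\<close>

definition down_vertex :: "nat \<Rightarrow> nat \<Rightarrow> nat \<Rightarrow> gvert" where
  "down_vertex n i j = (if i < n then Node (Suc i) j else Sink)"

lemma right_edge_in_G_edges:
  "1 \<le> i \<Longrightarrow> i \<le> n \<Longrightarrow> j < m \<Longrightarrow> (Node i j, Node i (Suc j)) \<in> G_edges n m"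
  by (auto simp: G_edges_def)

lemma down_edge_in_G_edges:
  "1 \<le> i \<Longrightarrow> i \<le> n \<Longrightarrow> j \<le> m \<Longrightarrow> (Node i j, down_vertex n i j) \<in> G_edges n m"
  by (auto simp: G_edges_def down_vertex_def)

lemma G_edges_cases:
  assumes "e \<in> G_edges n m" and "0 < n"
  obtains (right) i j where "e = (Node i j, Node i (Suc j))" "1 \<le> i" "i \<le> n" "j < m"
    | (down) i j where "e = (Node i j, down_vertex n i j)" "1 \<le> i" "i \<le> n" "j \<le> m"
  using assms unfolding G_edges_def down_vertex_def
  by (auto split: if_splits)

lemma G_edges_from_node_sum:
  assumes "1 \<le> i" "i \<le> n" "j \<le> m"
  shows "(\<Sum>e \<in> {e \<in> G_edges n m. fst e = Node i j}. f e) =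
     (if j < m then f (Node i j, Node i (Suc j)) else 0) + f (Node i j, down_vertex n i j)"
proof -
  have from_node: "{e \<in> G_edges n m. fst e = Node i j} =
      (if j < m then {(Node i j, Node i (Suc j))} else {}) \<union> {(Node i j, down_vertex n i j)}"
    using assms by (auto simp: G_edges_def down_vertex_def)
  show ?thesis
    unfolding from_node by (cases "j < m") (simp_all add: down_vertex_def add_ac)
qed

lemma G_edges_into_node_sum:
  assumes "1 \<le> i" "i \<le> n" "j \<le> m"
  shows "(\<Sum>e \<in> {e \<in> G_edges n m. snd e = Node i j}. f e) =
     (if 0 < j then f (Node i (j - 1), Node i j) else 0)
     + (if 1 < i then f (Node (i - 1) j, Node i j) else 0)"
proof -
  have into: "{e \<in> G_edges n m. snd e = Node i j} =
      (if 0 < j then {(Node i (j - 1), Node i j)} else {})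
      \<union> (if 1 < i then {(Node (i - 1) j, Node i j)} else {})"
    using assms by (auto simp: G_edges_def)
  show ?thesis
    unfolding into by (cases "0 < j"; cases "1 < i") (simp_all add: add_ac)
qed

lemma flow_balance_at_node:
  fixes f :: "gvert \<times> gvert \<Rightarrow> real"
  assumes off: "\<forall>e. e \<notin> G_edges n m \<longrightarrow> f e = 0" and ij: "1 \<le> i" "i \<le> n" "j \<le> m"
  shows "(\<Sum>e \<in> {e \<in> G_edges n m. fst e = Node i j}. f e)
       - (\<Sum>e \<in> {e \<in> G_edges n m. snd e = Node i j}. f e)
     = (if j < m then f (Node i j, Node i (Suc j)) else 0) + f (Node i j, down_vertex n i j)
       - (if 0 < j then f (Node i (j - 1), Node i j) else 0)
       - f (Node (i - 1) j, down_vertex n (i - 1) j)"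
proof -
  have "(if 1 < i then f (Node (i - 1) j, Node i j) else 0) = f (Node (i - 1) j, down_vertex n (i - 1) j)"
  proof (cases "1 < i")
    case True
    then have "down_vertex n (i - 1) j = Node i j"
      using ij by (simp add: down_vertex_def)
    then show ?thesis using True by simp
  next
    case False
    then have "(Node (i - 1) j, down_vertex n (i - 1) j) \<notin> G_edges n m"
      using ij by (auto simp: G_edges_def down_vertex_def)
    then show ?thesis using False off by simp
  qed
  then show ?thesis
    unfolding G_edges_from_node_sum[OF ij] G_edges_into_node_sum[OF ij] by (simp add: algebra_simps)
qed

lemma flow_balance_at_sink:
  fixes f :: "gvert \<times> gvert \<Rightarrow> real"
  shows "(\<Sum>e \<in> {e \<in> G_edges n m. fst e = Sink}. f e) - (\<Sum>e \<in> {e \<in> G_edges n m. snd e = Sink}. f e)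
     = - (\<Sum>j\<le>m. f (Node n j, down_vertex n n j))"
proof -
  have "{e \<in> G_edges n m. fst e = Sink} = {}"
    by (auto simp: G_edges_def)
  moreover have "{e \<in> G_edges n m. snd e = Sink} = (\<lambda>j. (Node n j, down_vertex n n j)) ` {..m}"
    by (auto simp: G_edges_def down_vertex_def)
  ultimately show ?thesis
    by (simp only:) (simp add: sum.reindex inj_on_def)
qed

subsection \<open>Plane partitions as count arrays\<close>

definition prefix_sum :: "(nat \<Rightarrow> nat) \<Rightarrow> nat \<Rightarrow> nat" where
  "prefix_sum a i = (\<Sum>k = 1..i. a k)"

lemma prefix_sum_0 [simp]: "prefix_sum a 0 = 0"
  by (simp add: prefix_sum_def)

lemma prefix_sum_Suc: "prefix_sum a (Suc i) = prefix_sum a i + a (Suc i)"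
  by (simp add: prefix_sum_def)

lemma prefix_sum_pred: "1 \<le> i \<Longrightarrow> prefix_sum a i = prefix_sum a (i - 1) + a i"
  using prefix_sum_Suc[of a "i - 1"] by simp

lemma prefix_sum_mono: "i \<le> i' \<Longrightarrow> prefix_sum a i \<le> prefix_sum a i'"
  unfolding prefix_sum_def by (rule sum_mono2) auto

lemma skew_cells_rowD: "(r, c) \<in> skew_cells a b n \<Longrightarrow> 1 \<le> r \<and> r \<le> n"
  by (simp add: skew_cells_def)

lemma skew_cells_row:
  assumes "1 \<le> i" "i \<le> n"
  shows "(Suc n - i, c) \<in> skew_cells a b n \<longleftrightarrow> c \<in> {prefix_sum b i<..prefix_sum a i}"
proof -
  have "1 \<le> Suc n - i" "Suc n - i \<le> n" "Suc n - (Suc n - i) = i"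
    using assms by arith+
  then show ?thesis
    by (simp add: skew_cells_def shape_part_def prefix_sum_def)
qed

lemma plane_partition_row_antimono:
  assumes P: "P \<in> plane_partitions_bounded a b n m"
    and c: "(r, c) \<in> skew_cells a b n" and "c \<le> c'" and "(r, c') \<in> skew_cells a b n"
  shows "P (r, c') \<le> P (r, c)"
  using \<open>c \<le> c'\<close> \<open>(r, c') \<in> skew_cells a b n\<close>
proof (induction c' rule: dec_induct)
  case (step k)
  then have "(r, k) \<in> skew_cells a b n"
    using c by (auto simp: skew_cells_def)
  then have "P (r, Suc k) \<le> P (r, k)"
    using P step.prems by (simp add: plane_partitions_bounded_def)
  then show ?case
    using step.IH[OF \<open>(r, k) \<in> skew_cells a b n\<close>] by simp
qed simp

lemma card_downward_closed_le_iff: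
  assumes closed: "\<And>j j'. j' \<le> j \<Longrightarrow> j < m \<Longrightarrow> g j \<Longrightarrow> g j'" and "k < m"
  shows "card {j \<in> {..<m}. g j} \<le> k \<longleftrightarrow> \<not> g k"
proof (cases "g k")
  case True
  then have "{..k} \<subseteq> {j \<in> {..<m}. g j}"
    using closed \<open>k < m\<close> by auto
  then have "card {..k} \<le> card {j \<in> {..<m}. g j}"
    by (intro card_mono) auto
  then show ?thesis
    using True by simp
next
  case False
  then have "{j \<in> {..<m}. g j} \<subseteq> {..<k}"
    using closed by (auto simp: not_less) (meson not_le_imp_less)
  then show ?thesis
    using False card_mono[of "{..<k}"] by fastforce
qed

lemma card_filter_lessThan_le: "card {j. j < m \<and> g j} \<le> (m::nat)"
  using card_mono[of "{..<m}" "{j. j < m \<and> g j}"] by auto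

definition count_arrays :: "(nat \<Rightarrow> nat) \<Rightarrow> (nat \<Rightarrow> nat) \<Rightarrow> nat \<Rightarrow> nat \<Rightarrow> (nat \<Rightarrow> nat \<Rightarrow> nat) set" where
  "count_arrays a b n m =
     {C. (\<forall>i j. C i j \<noteq> 0 \<longrightarrow> i \<in> {1..n} \<and> j \<le> m)
       \<and> (\<forall>i \<in> {1..n}. C i m + prefix_sum b i = prefix_sum a i
            \<and> mono_on {..m} (C i)
            \<and> (\<forall>j < m. C i j \<le> a i + C (i - 1) j))}"

lemma count_arraysD:
  assumes "C \<in> count_arrays a b n m"
  shows "\<And>i j. i \<notin> {1..n} \<or> m < j \<Longrightarrow> C i j = 0"
    and "\<And>i. i \<in> {1..n} \<Longrightarrow> C i m + prefix_sum b i = prefix_sum a i"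
    and "\<And>i j j'. i \<in> {1..n} \<Longrightarrow> j \<le> j' \<Longrightarrow> j' \<le> m \<Longrightarrow> C i j \<le> C i j'"
    and "\<And>i j. i \<in> {1..n} \<Longrightarrow> j < m \<Longrightarrow> C i j \<le> a i + C (i - 1) j"
  using assms unfolding count_arrays_def by (auto simp: mono_on_def) (meson not_gr0 not_le)

lemma count_arrays_last_column:
  assumes "C \<in> count_arrays a b n m" "i \<le> n"
  shows "real (C i m) = real (prefix_sum a i) - real (prefix_sum b i)"
proof (cases "i = 0")
  case True
  then show ?thesis using count_arraysD(1)[OF assms(1)] by simp
next
  case False
  then show ?thesis
    using count_arraysD(2)[OF assms(1), of i] assms(2) by (simp flip: of_nat_add)
qed

text \<open>Row i of the shape, counted from the bottom, is row n + 1 - i of the diagram.\<close>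

definition counts_of_partition ::
  "(nat \<Rightarrow> nat) \<Rightarrow> (nat \<Rightarrow> nat) \<Rightarrow> nat \<Rightarrow> nat \<Rightarrow> (nat \<times> nat \<Rightarrow> nat) \<Rightarrow> nat \<Rightarrow> nat \<Rightarrow> nat" where
  "counts_of_partition a b n m P i j =
     (if i \<in> {1..n} \<and> j \<le> m
      then card {c \<in> {prefix_sum b i<..prefix_sum a i}. P (Suc n - i, c) \<le> j} else 0)"

text \<open>
  In a weakly decreasing row the cells with entry at most j form a final segment, of length
  C i j; so the cell in column c has entry greater than j iff c + C i j \<le> a_1 + ... + a_i.
\<close>

definition partition_of_counts ::
  "(nat \<Rightarrow> nat) \<Rightarrow> (nat \<Rightarrow> nat) \<Rightarrow> nat \<Rightarrow> nat \<Rightarrow> (nat \<Rightarrow> nat \<Rightarrow> nat) \<Rightarrow> nat \<times> nat \<Rightarrow> nat" where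
  "partition_of_counts a b n m C =
     (\<lambda>(r, c). if (r, c) \<in> skew_cells a b n
       then card {j \<in> {..<m}. c + C (Suc n - r) j \<le> prefix_sum a (Suc n - r)} else 0)"

lemma counts_of_partition_column:
  assumes P: "P \<in> plane_partitions_bounded a b n m" and i: "1 \<le> i" "i \<le> n"
  shows "counts_of_partition a b n m P i j \<le> a i + counts_of_partition a b n m P (i - 1) j"
proof (cases "j \<le> m")
  case True
  define r where "r = Suc n - i"
  let ?S = "{c \<in> {prefix_sum b i<..prefix_sum a i}. P (r, c) \<le> j}"
  let ?T = "{c \<in> {prefix_sum b (i - 1)<..prefix_sum a (i - 1)}. P (Suc r, c) \<le> j}"
  have cells: "(r, c) \<in> skew_cells a b n \<longleftrightarrow> c \<in> {prefix_sum b i<..prefix_sum a i}" for c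
    unfolding r_def using skew_cells_row[OF i] .
  \<comment> \<open>outside the last a_i columns, a cell of row i sits above a cell of row i - 1,
    whose entry is no larger\<close>
  have split: "?S \<subseteq> {prefix_sum a (i - 1)<..prefix_sum a i} \<union> ?T"
  proof
    fix c assume c: "c \<in> ?S"
    show "c \<in> {prefix_sum a (i - 1)<..prefix_sum a i} \<union> ?T"
    proof (cases "prefix_sum a (i - 1) < c")
      case False
      then have "i \<noteq> 1" using c by auto
      then have i': "1 \<le> i - 1" "i - 1 \<le> n" and r': "Suc n - (i - 1) = Suc r"
        using i by (auto simp: r_def)
      have "prefix_sum b (i - 1) \<le> prefix_sum b i"
        by (rule prefix_sum_mono) simp
      then have "c \<in> {prefix_sum b (i - 1)<..prefix_sum a (i - 1)}"
        using c False by auto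
      then have "(Suc r, c) \<in> skew_cells a b n"
        using skew_cells_row[OF i'] unfolding r' by blast
      moreover have "(r, c) \<in> skew_cells a b n"
        using c cells by blast
      ultimately have "P (Suc r, c) \<le> P (r, c)"
        using P by (simp add: plane_partitions_bounded_def)
      then show ?thesis
        using c \<open>c \<in> {prefix_sum b (i - 1)<..prefix_sum a (i - 1)}\<close> by auto
    qed (use c in auto)
  qed
  have "card ?S \<le> card ({prefix_sum a (i - 1)<..prefix_sum a i} \<union> ?T)"
    by (rule card_mono[OF _ split]) simp
  also have "\<dots> \<le> card {prefix_sum a (i - 1)<..prefix_sum a i} + card ?T"
    by (rule card_Un_le)
  finally have "card ?S \<le> card {prefix_sum a (i - 1)<..prefix_sum a i} + card ?T" .
  moreover have "card {prefix_sum a (i - 1)<..prefix_sum a i} = a i"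
    using prefix_sum_pred[OF i(1), of a] by simp
  moreover have "counts_of_partition a b n m P (i - 1) j = card ?T"
    using i True by (auto simp: counts_of_partition_def r_def Suc_diff_le)
  ultimately show ?thesis
    using i True by (simp add: counts_of_partition_def r_def)
qed (simp add: counts_of_partition_def)

lemma counts_of_partition_in_count_arrays:
  assumes P: "P \<in> plane_partitions_bounded a b n m"
    and dom: "\<forall>i \<in> {1..n}. prefix_sum b i \<le> prefix_sum a i"
  shows "counts_of_partition a b n m P \<in> count_arrays a b n m"
proof -
  have last: "counts_of_partition a b n m P i m + prefix_sum b i = prefix_sum a i"
    if i: "i \<in> {1..n}" for i
  proof -
    have "P (Suc n - i, c) \<le> m" if "c \<in> {prefix_sum b i<..prefix_sum a i}" for c
      using P that skew_cells_row[of i n c a b] i by (auto simp: plane_partitions_bounded_def)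
    then have "{c \<in> {prefix_sum b i<..prefix_sum a i}. P (Suc n - i, c) \<le> m}
        = {prefix_sum b i<..prefix_sum a i}"
      by blast
    then have "counts_of_partition a b n m P i m = card {prefix_sum b i<..prefix_sum a i}"
      using i by (simp add: counts_of_partition_def)
    then show ?thesis using dom i by simp
  qed
  have mono: "mono_on {..m} (counts_of_partition a b n m P i)" for i
    by (rule mono_onI) (auto simp: counts_of_partition_def intro!: card_mono)
  have support: "counts_of_partition a b n m P i j \<noteq> 0 \<longrightarrow> i \<in> {1..n} \<and> j \<le> m" for i j
    by (simp add: counts_of_partition_def)
  show ?thesis
    unfolding count_arrays_def
    using support last mono counts_of_partition_column[OF P] by auto
qed

lemma partition_of_counts_in_plane_partitions:
  assumes C: "C \<in> count_arrays a b n m"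
  shows "partition_of_counts a b n m C \<in> plane_partitions_bounded a b n m"
proof -
  let ?P = "partition_of_counts a b n m C"
  have bounded: "?P (r, c) \<le> m" for r c
    by (simp add: partition_of_counts_def card_filter_lessThan_le)
  have row: "?P (r, Suc c) \<le> ?P (r, c)"
    if "(r, c) \<in> skew_cells a b n" "(r, Suc c) \<in> skew_cells a b n" for r c
    using that by (auto simp: partition_of_counts_def intro!: card_mono)
  have column: "?P (Suc r, c) \<le> ?P (r, c)"
    if cells: "(r, c) \<in> skew_cells a b n" "(Suc r, c) \<in> skew_cells a b n" for r c
  proof -
    define i where "i = Suc n - r"
    have "1 \<le> r" "Suc r \<le> n"
      using cells skew_cells_rowD by blast+
    then have i: "i \<in> {1..n}" "n - r = i - 1"
      by (auto simp: i_def)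
    have "c + C i j \<le> prefix_sum a i"
      if "c + C (i - 1) j \<le> prefix_sum a (i - 1)" "j < m" for j
      using that count_arraysD(4)[OF C i(1) that(2)] prefix_sum_pred[of i a] i(1) by auto
    then show ?thesis
      using cells by (auto simp: partition_of_counts_def i(2) simp flip: i_def intro!: card_mono)
  qed
  show ?thesis
    unfolding plane_partitions_bounded_def
    using bounded row column by (auto simp: partition_of_counts_def)
qed

lemma partition_entry_gt_iff:
  assumes P: "P \<in> plane_partitions_bounded a b n m"
    and i: "1 \<le> i" "i \<le> n" and c: "c \<in> {prefix_sum b i<..prefix_sum a i}" and "j \<le> m"
  shows "j < P (Suc n - i, c) \<longleftrightarrow> c + counts_of_partition a b n m P i j \<le> prefix_sum a i"
proof -
  define r where "r = Suc n - i"
  let ?S = "{c' \<in> {prefix_sum b i<..prefix_sum a i}. P (r, c') \<le> j}"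
  have count: "counts_of_partition a b n m P i j = card ?S"
    using i \<open>j \<le> m\<close> by (simp add: counts_of_partition_def r_def)
  have cells: "(r, c') \<in> skew_cells a b n \<longleftrightarrow> c' \<in> {prefix_sum b i<..prefix_sum a i}" for c'
    unfolding r_def using skew_cells_row[OF i] .
  have antimono: "P (r, c'') \<le> P (r, c')"
    if "c' \<le> c''" "c' \<in> {prefix_sum b i<..prefix_sum a i}" "c'' \<in> {prefix_sum b i<..prefix_sum a i}"
    for c' c''
    using plane_partition_row_antimono[OF P] that cells by blast
  show ?thesis
  proof
    assume gt: "j < P (Suc n - i, c)"
    have "c < c'" if c': "c' \<in> ?S" for c'
    proof (rule ccontr)
      assume "\<not> c < c'"
      then have "P (r, c) \<le> P (r, c')"
        using antimono c c' by simp
      then show False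
        using gt c' by (simp add: r_def)
    qed
    then have "?S \<subseteq> {c<..prefix_sum a i}"
      by auto
    then have "card ?S \<le> prefix_sum a i - c"
      using card_mono[of "{c<..prefix_sum a i}" ?S] by simp
    moreover have "c \<le> prefix_sum a i"
      using c by simp
    ultimately show "c + counts_of_partition a b n m P i j \<le> prefix_sum a i"
      unfolding count by linarith
  next
    assume le: "c + counts_of_partition a b n m P i j \<le> prefix_sum a i"
    show "j < P (Suc n - i, c)"
    proof (rule ccontr)
      assume "\<not> j < P (Suc n - i, c)"
      then have "P (r, c') \<le> j" if "c' \<in> {c..prefix_sum a i}" for c'
        using antimono[of c c'] c that by (simp add: r_def)
      then have "{c..prefix_sum a i} \<subseteq> ?S"
        using c by auto
      then have "card {c..prefix_sum a i} \<le> card ?S"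
        by (intro card_mono) auto
      then show False
        using le count c by simp
    qed
  qed
qed

lemma partition_of_counts_of_partition:
  assumes P: "P \<in> plane_partitions_bounded a b n m"
  shows "partition_of_counts a b n m (counts_of_partition a b n m P) = P"
proof
  fix rc :: "nat \<times> nat"
  obtain r c where rc: "rc = (r, c)" by fastforce
  show "partition_of_counts a b n m (counts_of_partition a b n m P) rc = P rc"
  proof (cases "(r, c) \<in> skew_cells a b n")
    case True
    define i where "i = Suc n - r"
    have i: "1 \<le> i" "i \<le> n" "Suc n - i = r"
      using skew_cells_rowD[OF True] by (auto simp: i_def)
    have c: "c \<in> {prefix_sum b i<..prefix_sum a i}"
      using True skew_cells_row[OF i(1,2)] unfolding i(3) by blast
    have Pm: "P (r, c) \<le> m"
      using P True by (simp add: plane_partitions_bounded_def)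
    have "{j \<in> {..<m}. c + counts_of_partition a b n m P i j \<le> prefix_sum a i}
        = {j \<in> {..<m}. j < P (r, c)}"
      using partition_entry_gt_iff[OF P i(1,2) c] unfolding i(3) by auto
    also have "\<dots> = {..<P (r, c)}"
      using Pm by auto
    finally show ?thesis
      using True by (simp add: rc partition_of_counts_def flip: i_def)
  next
    case False
    then show ?thesis
      using P by (simp add: rc partition_of_counts_def plane_partitions_bounded_def)
  qed
qed

lemma counts_of_partition_of_counts:
  assumes C: "C \<in> count_arrays a b n m"
  shows "counts_of_partition a b n m (partition_of_counts a b n m C) = C"
proof (intro ext)
  fix i j
  show "counts_of_partition a b n m (partition_of_counts a b n m C) i j = C i j"
  proof (cases "i \<in> {1..n} \<and> j \<le> m")
    case True
    then have i: "1 \<le> i" "i \<le> n" and "j \<le> m" by auto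
    have r: "Suc n - (Suc n - i) = i"
      using i by simp
    let ?I = "{prefix_sum b i<..prefix_sum a i}"
    let ?entry = "\<lambda>c. card {j' \<in> {..<m}. c + C i j' \<le> prefix_sum a i}"
    have entry: "partition_of_counts a b n m C (Suc n - i, c) = ?entry c" if "c \<in> ?I" for c
      using that skew_cells_row[OF i] by (simp add: partition_of_counts_def r)
    have "card {c \<in> ?I. ?entry c \<le> j} = C i j"
    proof (cases "j = m")
      case True
      have "?entry c \<le> m" for c
        by (simp add: card_filter_lessThan_le)
      then have "{c \<in> ?I. ?entry c \<le> j} = ?I"
        using True by blast
      then show ?thesis
        using True count_arraysD(2)[OF C, of i] i by simp
    next
      case False
      then have "j < m" using \<open>j \<le> m\<close> by simp
      have "?entry c \<le> j \<longleftrightarrow> prefix_sum a i < c + C i j" for c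
        by (subst card_downward_closed_le_iff[OF _ \<open>j < m\<close>])
          (use count_arraysD(3)[OF C] i in \<open>auto intro: order_trans[rotated] add_left_mono\<close>)
      moreover have "C i j \<le> C i m"
        using count_arraysD(3)[OF C] i \<open>j \<le> m\<close> by simp
      then have "{c \<in> ?I. prefix_sum a i < c + C i j} = {prefix_sum a i - C i j<..prefix_sum a i}"
        using count_arraysD(2)[OF C, of i] i by auto
      ultimately show ?thesis
        using count_arraysD(2)[OF C, of i] i \<open>C i j \<le> C i m\<close> by simp
    qed
    then show ?thesis
      using True entry by (simp add: counts_of_partition_def cong: conj_cong)
  next
    case False
    then show ?thesis
      using count_arraysD(1)[OF C, of i j] by (auto simp: counts_of_partition_def)
  qed
qed

lemma bij_betw_counts_of_partition:
  assumes "\<forall>i \<in> {1..n}. prefix_sum b i \<le> prefix_sum a i"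
  shows "bij_betw (counts_of_partition a b n m)
           (plane_partitions_bounded a b n m) (count_arrays a b n m)"
  by (rule bij_betw_byWitness[where f' = "partition_of_counts a b n m"])
    (use assms partition_of_counts_of_partition counts_of_partition_of_counts
       counts_of_partition_in_count_arrays partition_of_counts_in_plane_partitions in auto)

subsection \<open>Integer flows as count arrays\<close>

definition count_increment :: "(nat \<Rightarrow> nat \<Rightarrow> nat) \<Rightarrow> nat \<Rightarrow> nat \<Rightarrow> real" where
  "count_increment C i j = real (C i j) - (if j = 0 then 0 else real (C i (j - 1)))"

lemma sum_count_increment: "(\<Sum>k\<le>j. count_increment C i k) = real (C i j)"
  by (induction j) (auto simp: count_increment_def)

text \<open>
  The downward edge out of (i, j) carries the number of entries equal to j in row i; the
  horizontal edges carry what conservation then forces.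
\<close>

definition flow_of_counts ::
  "(nat \<Rightarrow> nat) \<Rightarrow> nat \<Rightarrow> nat \<Rightarrow> (nat \<Rightarrow> nat \<Rightarrow> nat) \<Rightarrow> gvert \<times> gvert \<Rightarrow> real" where
  "flow_of_counts a n m C e =
     (if e \<in> G_edges n m then
        (case e of
          (Node i j, Node i' _) \<Rightarrow>
            if i' = i then real (a i + C (i - 1) j) - real (C i j) else count_increment C i j
        | (Node i j, Sink) \<Rightarrow> count_increment C i j
        | _ \<Rightarrow> 0)
      else 0)"

lemma flow_of_counts_right:
  "1 \<le> i \<Longrightarrow> i \<le> n \<Longrightarrow> j < m \<Longrightarrow>
    flow_of_counts a n m C (Node i j, Node i (Suc j)) = real (a i + C (i - 1) j) - real (C i j)"
  using right_edge_in_G_edges by (simp add: flow_of_counts_def)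

lemma flow_of_counts_down:
  "1 \<le> i \<Longrightarrow> i \<le> n \<Longrightarrow> j \<le> m \<Longrightarrow>
    flow_of_counts a n m C (Node i j, down_vertex n i j) = count_increment C i j"
  using down_edge_in_G_edges by (simp add: flow_of_counts_def down_vertex_def)

lemma flow_of_counts_down_from_above:
  assumes C: "C \<in> count_arrays a b n m" and "1 \<le> i" "i \<le> n" "j \<le> m"
  shows "flow_of_counts a n m C (Node (i - 1) j, down_vertex n (i - 1) j) = count_increment C (i - 1) j"
proof (cases "i = 1")
  case True
  then have "(Node (i - 1) j, down_vertex n (i - 1) j) \<notin> G_edges n m"
    using assms(3) by (auto simp: G_edges_def down_vertex_def)
  then show ?thesis
    using True count_arraysD(1)[OF C] by (simp add: flow_of_counts_def count_increment_def)
next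
  case False
  then show ?thesis
    using assms by (intro flow_of_counts_down) auto
qed

lemma flow_of_counts_balance_at_node:
  assumes C: "C \<in> count_arrays a b n m" and "0 < m" and i: "1 \<le> i" "i \<le> n" and "j \<le> m"
  shows "(if j < m then real (a i + C (i - 1) j) - real (C i j) else 0) + count_increment C i j
      - (if 0 < j then real (a i + C (i - 1) (j - 1)) - real (C i (j - 1)) else 0)
      - count_increment C (i - 1) j
    = G_netflow a b n m (Node i j)"
proof (cases "j = m")
  case True
  have "real (prefix_sum a i) = real (prefix_sum a (i - 1)) + real (a i)"
    "real (prefix_sum b i) = real (prefix_sum b (i - 1)) + real (b i)"
    using prefix_sum_pred[OF i(1)] by simp_all
  then show ?thesis
    using True \<open>0 < m\<close> i count_arrays_last_column[OF C, of i] count_arrays_last_column[OF C, of "i - 1"]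
    by (simp add: count_increment_def G_netflow_def)
next
  case False
  then show ?thesis
    using \<open>j \<le> m\<close> by (auto simp: count_increment_def G_netflow_def)
qed

lemma flow_of_counts_in_integer_flows:
  assumes C: "C \<in> count_arrays a b n m" and "0 < n" "0 < m"
  shows "flow_of_counts a n m C \<in> integer_flows a b n m"
proof -
  let ?f = "flow_of_counts a n m C"
  have off: "\<forall>e. e \<notin> G_edges n m \<longrightarrow> ?f e = 0"
    by (simp add: flow_of_counts_def)
  have nonneg: "0 \<le> ?f e" if "e \<in> G_edges n m" for e
    using that \<open>0 < n\<close>
  proof (cases rule: G_edges_cases)
    case (right i j)
    then show ?thesis
      using count_arraysD(4)[OF C, of i j] by (simp add: flow_of_counts_right)
  next
    case (down i j)
    then show ?thesis
      using count_arraysD(3)[OF C, of i "j - 1" j]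
      by (simp add: flow_of_counts_down count_increment_def)
  qed
  have integral: "?f e \<in> \<int>" for e
    by (auto simp: flow_of_counts_def count_increment_def split: prod.split gvert.split)
  have balance: "(\<Sum>e \<in> {e \<in> G_edges n m. fst e = v}. ?f e) - (\<Sum>e \<in> {e \<in> G_edges n m. snd e = v}. ?f e)
      = G_netflow a b n m v" if "v \<in> G_verts n m" for v
  proof (cases v)
    case (Node i j)
    then have ij: "1 \<le> i" "i \<le> n" "j \<le> m"
      using that by (auto simp: G_verts_def)
    have "(if j < m then ?f (Node i j, Node i (Suc j)) else 0)
        = (if j < m then real (a i + C (i - 1) j) - real (C i j) else 0)"
      using flow_of_counts_right[OF ij(1,2)] by simp
    moreover have "(if 0 < j then ?f (Node i (j - 1), Node i j) else 0)
        = (if 0 < j then real (a i + C (i - 1) (j - 1)) - real (C i (j - 1)) else 0)"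
      using flow_of_counts_right[OF ij(1,2), of "j - 1"] ij(3) by auto
    ultimately show ?thesis
      unfolding Node flow_balance_at_node[OF off ij] flow_of_counts_down[OF ij]
        flow_of_counts_down_from_above[OF C ij]
      using flow_of_counts_balance_at_node[OF C \<open>0 < m\<close> ij] by simp
  next
    case Sink
    have "(\<Sum>j\<le>m. ?f (Node n j, down_vertex n n j)) = (\<Sum>j\<le>m. count_increment C n j)"
      using \<open>0 < n\<close> by (intro sum.cong) (auto simp: flow_of_counts_down)
    also have "\<dots> = real (prefix_sum a n) - real (prefix_sum b n)"
      using count_arrays_last_column[OF C, of n] by (simp add: sum_count_increment)
    finally show ?thesis
      unfolding Sink flow_balance_at_sink by (simp add: G_netflow_def prefix_sum_def of_nat_sum)
  qed
  show ?thesis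
    unfolding integer_flows_def flow_polytope_def
    using off nonneg integral balance by auto
qed

definition down_flow_sum :: "nat \<Rightarrow> (gvert \<times> gvert \<Rightarrow> real) \<Rightarrow> nat \<Rightarrow> nat \<Rightarrow> real" where
  "down_flow_sum n f i j = (\<Sum>k\<le>j. f (Node i k, down_vertex n i k))"

definition counts_of_flow :: "nat \<Rightarrow> nat \<Rightarrow> (gvert \<times> gvert \<Rightarrow> real) \<Rightarrow> nat \<Rightarrow> nat \<Rightarrow> nat" where
  "counts_of_flow n m f i j = (if j \<le> m then nat \<lfloor>down_flow_sum n f i j\<rfloor> else 0)"

lemma down_flow_sum_Suc:
  "down_flow_sum n f i (Suc j) = down_flow_sum n f i j + f (Node i (Suc j), down_vertex n i (Suc j))"
  by (simp add: down_flow_sum_def)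

lemma down_flow_sum_flow_of_counts:
  assumes "1 \<le> i" "i \<le> n" "j \<le> m"
  shows "down_flow_sum n (flow_of_counts a n m C) i j = real (C i j)"
proof -
  have "down_flow_sum n (flow_of_counts a n m C) i j = (\<Sum>k\<le>j. count_increment C i k)"
    unfolding down_flow_sum_def using assms by (intro sum.cong) (auto simp: flow_of_counts_down)
  then show ?thesis
    by (simp add: sum_count_increment)
qed

lemma counts_of_flow_of_counts:
  assumes C: "C \<in> count_arrays a b n m" and "0 < n"
  shows "counts_of_flow n m (flow_of_counts a n m C) = C"
proof (intro ext)
  fix i j
  show "counts_of_flow n m (flow_of_counts a n m C) i j = C i j"
  proof (cases "i \<in> {1..n} \<and> j \<le> m")
    case True
    then show ?thesis
      by (simp add: counts_of_flow_def down_flow_sum_flow_of_counts)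
  next
    case False
    have "(Node i k, down_vertex n i k) \<notin> G_edges n m" if "i \<notin> {1..n}" for k
      using that \<open>0 < n\<close> by (auto simp: G_edges_def down_vertex_def)
    then have "down_flow_sum n (flow_of_counts a n m C) i j = 0" if "i \<notin> {1..n}"
      using that by (simp add: down_flow_sum_def flow_of_counts_def)
    then show ?thesis
      using False count_arraysD(1)[OF C, of i j] by (auto simp: counts_of_flow_def)
  qed
qed

context
  fixes a b :: "nat \<Rightarrow> nat" and n m :: nat and f :: "gvert \<times> gvert \<Rightarrow> real"
  assumes f: "f \<in> integer_flows a b n m"
begin

lemma integer_flow_outside: "e \<notin> G_edges n m \<Longrightarrow> f e = 0"
  using f unfolding integer_flows_def flow_polytope_def by blast

lemma integer_flow_nonneg: "0 \<le> f e"
  using f integer_flow_outside[of e] by (cases "e \<in> G_edges n m") (auto simp: integer_flows_def flow_polytope_def)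

lemma integer_flow_balance_at_node:
  assumes "1 \<le> i" "i \<le> n" "j \<le> m"
  shows "(if j < m then f (Node i j, Node i (Suc j)) else 0) + f (Node i j, down_vertex n i j)
       - (if 0 < j then f (Node i (j - 1), Node i j) else 0)
       - f (Node (i - 1) j, down_vertex n (i - 1) j)
     = G_netflow a b n m (Node i j)"
proof -
  have "Node i j \<in> G_verts n m"
    using assms by (auto simp: G_verts_def)
  then show ?thesis
    using f integer_flow_outside flow_balance_at_node[OF _ assms, of f]
    by (simp add: integer_flows_def flow_polytope_def)
qed

lemma down_flow_sum_outside:
  assumes "0 < n" and "i \<notin> {1..n}"
  shows "down_flow_sum n f i j = 0"
  unfolding down_flow_sum_def
  using assms by (intro sum.neutral ballI integer_flow_outside) (auto simp: G_edges_def down_vertex_def)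

lemma down_flow_sum_mono: "j \<le> j' \<Longrightarrow> down_flow_sum n f i j \<le> down_flow_sum n f i j'"
  unfolding down_flow_sum_def by (rule sum_mono2) (auto intro: integer_flow_nonneg)

lemma real_counts_of_flow:
  assumes "j \<le> m"
  shows "real (counts_of_flow n m f i j) = down_flow_sum n f i j"
proof -
  have "down_flow_sum n f i j \<in> \<int>"
    using f unfolding down_flow_sum_def integer_flows_def by (auto intro: Ints_sum)
  moreover have "0 \<le> down_flow_sum n f i j"
    unfolding down_flow_sum_def by (auto intro: sum_nonneg integer_flow_nonneg)
  ultimately show ?thesis
    using assms by (auto simp: counts_of_flow_def elim: Ints_cases)
qed

lemma integer_flow_right:
  assumes i: "1 \<le> i" "i \<le> n" and "j < m"
  shows "f (Node i j, Node i (Suc j)) = real (a i) + down_flow_sum n f (i - 1) j - down_flow_sum n f i j"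
  using \<open>j < m\<close>
proof (induction j)
  case 0
  then show ?case
    using integer_flow_balance_at_node[OF i, of 0] by (simp add: down_flow_sum_def G_netflow_def)
next
  case (Suc j)
  then show ?case
    using integer_flow_balance_at_node[OF i, of "Suc j"]
    by (simp add: down_flow_sum_Suc G_netflow_def)
qed

lemma down_flow_sum_last_column:
  assumes n: "0 < n" and m: "0 < m" and "i \<le> n"
  shows "down_flow_sum n f i m = real (prefix_sum a i) - real (prefix_sum b i)"
  using \<open>i \<le> n\<close>
proof (induction i)
  case 0
  then show ?case
    using down_flow_sum_outside[OF n] by simp
next
  case (Suc i)
  have m': "Suc (m - 1) = m"
    using m by simp
  have "down_flow_sum n f (Suc i) m = down_flow_sum n f (Suc i) (m - 1) + f (Node (Suc i) m, down_vertex n (Suc i) m)"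
    "down_flow_sum n f i m = down_flow_sum n f i (m - 1) + f (Node i m, down_vertex n i m)"
    using down_flow_sum_Suc[of n f _ "m - 1"] unfolding m' by simp_all
  moreover have "f (Node (Suc i) (m - 1), Node (Suc i) m)
      = real (a (Suc i)) + down_flow_sum n f i (m - 1) - down_flow_sum n f (Suc i) (m - 1)"
    using integer_flow_right[of "Suc i" "m - 1"] Suc.prems m m' by simp
  ultimately show ?case
    using integer_flow_balance_at_node[of "Suc i" m] Suc m
    by (simp add: G_netflow_def prefix_sum_Suc)
qed

lemma counts_of_flow_in_count_arrays:
  assumes "0 < n" and "0 < m"
  shows "counts_of_flow n m f \<in> count_arrays a b n m"
proof -
  let ?C = "counts_of_flow n m f"
  have support: "?C i j \<noteq> 0 \<longrightarrow> i \<in> {1..n} \<and> j \<le> m" for i j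
    using down_flow_sum_outside[OF \<open>0 < n\<close>, of i j] by (cases "i \<in> {1..n}") (auto simp: counts_of_flow_def)
  have last: "?C i m + prefix_sum b i = prefix_sum a i" if "i \<in> {1..n}" for i
    using real_counts_of_flow[of m i] down_flow_sum_last_column[OF assms, of i] that
    by (simp flip: of_nat_add)
  have mono: "mono_on {..m} (?C i)" for i
  proof (rule mono_onI)
    fix j j' assume "j \<in> {..m}" "j' \<in> {..m}" "j \<le> j'"
    then have "real (?C i j) \<le> real (?C i j')"
      by (simp add: real_counts_of_flow down_flow_sum_mono)
    then show "?C i j \<le> ?C i j'"
      by simp
  qed
  have column: "?C i j \<le> a i + ?C (i - 1) j" if "i \<in> {1..n}" "j < m" for i j
  proof -
    have "real (?C i j) \<le> real (a i + ?C (i - 1) j)"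
      using integer_flow_right[of i j] integer_flow_nonneg[of "(Node i j, Node i (Suc j))"] that
      by (simp add: real_counts_of_flow)
    then show ?thesis
      by (simp only: of_nat_le_iff)
  qed
  show ?thesis
    unfolding count_arrays_def using support last mono column by auto
qed

lemma flow_of_counts_of_flow:
  assumes "0 < n"
  shows "flow_of_counts a n m (counts_of_flow n m f) = f"
proof
  fix e
  show "flow_of_counts a n m (counts_of_flow n m f) e = f e"
  proof (cases "e \<in> G_edges n m")
    case True
    then show ?thesis
      using \<open>0 < n\<close>
    proof (cases rule: G_edges_cases)
      case (right i j)
      then show ?thesis
        using integer_flow_right[of i j]
        by (simp add: flow_of_counts_right real_counts_of_flow)
    next
      case (down i j)
      then show ?thesis
        by (cases j) (simp_all add: flow_of_counts_down count_increment_def real_counts_of_flow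
            down_flow_sum_def)
    qed
  next
    case False
    then show ?thesis
      by (simp add: flow_of_counts_def integer_flow_outside)
  qed
qed

end

lemma bij_betw_flow_of_counts:
  assumes "0 < n" "0 < m"
  shows "bij_betw (flow_of_counts a n m) (count_arrays a b n m) (integer_flows a b n m)"
  by (rule bij_betw_byWitness[where f' = "counts_of_flow n m"])
    (use assms counts_of_flow_of_counts flow_of_counts_of_flow flow_of_counts_in_integer_flows
       counts_of_flow_in_count_arrays in auto)

theorem theorem3p7:
  fixes n m :: nat and a b :: "nat \<Rightarrow> nat"
  assumes "0 < n" and "0 < m"
    and "\<forall>i \<in> {1..n}. (\<Sum>k = 1..i. b k) \<le> (\<Sum>k = 1..i. a k)"
  shows "\<exists>\<phi>. bij_betw \<phi> (plane_partitions_bounded a b n m) (integer_flows a b n m)"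
proof -
  have "\<forall>i \<in> {1..n}. prefix_sum b i \<le> prefix_sum a i"
    using assms(3) by (simp add: prefix_sum_def)
  then have "bij_betw (counts_of_partition a b n m) (plane_partitions_bounded a b n m) (count_arrays a b n m)"
    by (rule bij_betw_counts_of_partition)
  moreover have "bij_betw (flow_of_counts a n m) (count_arrays a b n m) (integer_flows a b n m)"
    using assms(1,2) by (rule bij_betw_flow_of_counts)
  ultimately show ?thesis
    by (blast intro: bij_betw_trans)
qed

end
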